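(* Let $q=|q|e^{i\varphi}$, where $|q|\in L^\infty(\mathbb{R})$ never vanishes and $\varphi:\mathbb{R}\to\mathbb{R}$ is locally absolutely continuous with $\partial_x\varphi\in L^\infty(\mathbb{R};\mathbb{R})$, and suppose that $u_\pm:=\frac12\partial_x\varphi\pm|q|\in L^\infty(\mathbb{R};\mathbb{R})$. Let $$L=\begin{pmatrix} i\partial_x & -iq\\ i\bar q & -i\partial_x\end{pmatrix}:H^1(\mathbb{R};\mathbb{C}^2)\to L^2(\mathbb{R};\mathbb{C}^2),\qquad \mathcal{L}=\begin{pmatrix} -u_- & i\partial_x\\ i\partial_x & -u_+\end{pmatrix}:H^1(\mathbb{R};\mathbb{C}^2)\to L^2(\mathbb{R};\mathbb{C}^2),$$ and let $M$ be the multiplication operator by the unitary matrix $$M=\frac1{\sqrt2}\begin{pmatrix} e^{-\frac12 i(\varphi-\frac\pi2)} & e^{\frac12 i(\varphi-\frac\pi2)}\\ e^{-\frac12 i(\varphi-\frac\pi2)} & -e^{\frac12 i(\varphi-\frac\pi2)}\end{pmatrix}.$$ Then $M$ maps $H^s(\mathbb{R};\mathbb{C}^2)$ bijectively onto itself for $s=0,1$, and $L$ and $\mathcal{L}$ are unitarily equivalent: $L=M^\ast\mathcal{L}M$.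
   Context: $L$ is the Lax operator of the one-dimensional cubic defocusing nonlinear Schrödinger equation $i\partial_t q+\partial_{xx}q=2|q|^2q$; $M^\ast$ denotes the conjugate transpose of $M$ (pointwise), which is its inverse. *)

theory Defs
  imports "HOL-Analysis.Analysis"
begin

text \<open>Vectors of C^2 are modelled as complex^2, 2x2 complex matrices as complex^2^2.
  Functions R -> C^2 are handled via pointwise representatives.\<close>

definition vec2 :: "complex \<Rightarrow> complex \<Rightarrow> complex^2" where
  "vec2 a b = (\<chi> i. if i = 1 then a else b)"

definition mat2 :: "complex \<Rightarrow> complex \<Rightarrow> complex \<Rightarrow> complex \<Rightarrow> complex^2^2" where
  "mat2 a b c d = (\<chi> i. if i = 1 then vec2 a b else vec2 c d)"

definition adjoint_mat :: "complex^'n^'n \<Rightarrow> complex^'n^'n" where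
  "adjoint_mat A = (\<chi> i j. cnj (A $ j $ i))"

definition ess_bounded :: "(real \<Rightarrow> real) \<Rightarrow> bool" where
  "ess_bounded f \<longleftrightarrow> f \<in> borel_measurable lborel \<and> (\<exists>C. AE x in lborel. \<bar>f x\<bar> \<le> C)"

definition loc_AC_with_deriv :: "(real \<Rightarrow> real) \<Rightarrow> (real \<Rightarrow> real) \<Rightarrow> bool" where
  "loc_AC_with_deriv f df \<longleftrightarrow>
     (\<forall>a b. set_integrable lborel {a..b} df) \<and>
     (\<forall>a b. a \<le> b \<longrightarrow> f b - f a = (LINT t:{a..b}|lborel. df t))"

definition L2 :: "(real \<Rightarrow> complex) \<Rightarrow> bool" where
  "L2 f \<longleftrightarrow> f \<in> borel_measurable lborel \<and> integrable lborel (\<lambda>x. (cmod (f x))\<^sup>2)"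

definition L2v :: "(real \<Rightarrow> complex^2) \<Rightarrow> bool" where
  "L2v u \<longleftrightarrow> (\<forall>i. L2 (\<lambda>x. u x $ i))"

text \<open>u' is an L^2 (weak) derivative of u, with u the locally absolutely continuous
  representative: u(b) - u(a) = integral of u' over [a,b].\<close>
definition H1_deriv :: "(real \<Rightarrow> complex^2) \<Rightarrow> (real \<Rightarrow> complex^2) \<Rightarrow> bool" where
  "H1_deriv u u' \<longleftrightarrow> L2v u' \<and>
     (\<forall>i a b. set_integrable lborel {a..b} (\<lambda>t. u' t $ i) \<and>
        (a \<le> b \<longrightarrow> u b $ i - u a $ i = (LINT t:{a..b}|lborel. u' t $ i)))"

definition L2set :: "(real \<Rightarrow> complex^2) set" where
  "L2set = {u. L2v u}"

definition H1set :: "(real \<Rightarrow> complex^2) set" where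
  "H1set = {u. L2v u \<and> (\<exists>u'. H1_deriv u u')}"

definition Mmat :: "(real \<Rightarrow> real) \<Rightarrow> real \<Rightarrow> complex^2^2" where
  "Mmat phi x =
     (let a = exp (- \<i> * complex_of_real ((phi x - pi / 2) / 2)) / complex_of_real (sqrt 2);
          b = exp (\<i> * complex_of_real ((phi x - pi / 2) / 2)) / complex_of_real (sqrt 2)
      in mat2 a b a (- b))"

definition Lax_op :: "(real \<Rightarrow> complex) \<Rightarrow> (real \<Rightarrow> complex^2) \<Rightarrow> (real \<Rightarrow> complex^2) \<Rightarrow> real \<Rightarrow> complex^2" where
  "Lax_op q u u' x =
     vec2 (\<i> * u' x $ 1 - \<i> * q x * u x $ 2) (\<i> * cnj (q x) * u x $ 1 - \<i> * u' x $ 2)"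

definition calL_op :: "(real \<Rightarrow> real) \<Rightarrow> (real \<Rightarrow> real) \<Rightarrow> (real \<Rightarrow> complex^2) \<Rightarrow> (real \<Rightarrow> complex^2) \<Rightarrow> real \<Rightarrow> complex^2" where
  "calL_op um up v v' x =
     vec2 (- complex_of_real (um x) * v x $ 1 + \<i> * v' x $ 2)
          (\<i> * v' x $ 1 - complex_of_real (up x) * v x $ 2)"

end

theory Submission
  imports Defs "HOL-Probability.Characteristic_Functions"
begin

(* Write M(x) = P (e^{i theta(x)}) with theta = (phi - pi/2)/2, where P = phase_mat is real-linear
   and takes unitary values on the unit circle.  Since theta is locally absolutely continuous with
   bounded derivative, M and M^* are bounded and locally absolutely continuous with bounded
   derivatives; by the product rule multiplication by them preserves L^2 and H^1, and being mutually
   inverse they are bijections of both.  For u in H^1 the derivative of Mu is a.e. M'u + Mu' with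
   M' = P (i theta' e^{i theta}), and q = i |q| e^{2 i theta}, so L = M^* calL M reduces to a pointwise
   identity between 2x2 matrices. *)

section \<open>Locally absolutely continuous primitives\<close>

text \<open>Henstock--Kurzweil version of \<^const>\<open>loc_AC_with_deriv\<close>; for measurable \<open>f\<close>
  the two agree (\<open>AC_primitive_iff_lborel\<close>).\<close>

definition AC_primitive :: "(real \<Rightarrow> 'a::euclidean_space) \<Rightarrow> (real \<Rightarrow> 'a) \<Rightarrow> bool" where
  "AC_primitive F f \<longleftrightarrow> (\<forall>a b. f absolutely_integrable_on {a..b}) \<and>
     (\<forall>a b. a \<le> b \<longrightarrow> F b - F a = integral {a..b} f)"

lemma AC_primitive_absolutely_integrable:
  "AC_primitive F f \<Longrightarrow> f absolutely_integrable_on {a..b}"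
  unfolding AC_primitive_def by blast

lemma AC_primitive_integrable: "AC_primitive F f \<Longrightarrow> f integrable_on {a..b}"
  by (rule set_lebesgue_integral_eq_integral(1)[OF AC_primitive_absolutely_integrable])

lemma AC_primitive_norm_integrable:
  "AC_primitive F f \<Longrightarrow> (\<lambda>x. norm (f x)) integrable_on {a..b}"
  using AC_primitive_absolutely_integrable absolutely_integrable_on_def by blast

lemma AC_primitive_diff: "AC_primitive F f \<Longrightarrow> a \<le> b \<Longrightarrow> F b - F a = integral {a..b} f"
  unfolding AC_primitive_def by blast

lemma AC_primitive_continuous: "AC_primitive F f \<Longrightarrow> continuous_on UNIV F"
proof -
  assume F: "AC_primitive F f"
  have "continuous_on {a..b} F" for a b
  proof (rule continuous_on_eq)
    show "continuous_on {a..b} (\<lambda>x. F a + integral {a..x} f)"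
      by (intro continuous_intros indefinite_integral_continuous_1 AC_primitive_integrable[OF F])
    show "F a + integral {a..x} f = F x" if "x \<in> {a..b}" for x
      using AC_primitive_diff[OF F, of a x] that by (simp add: algebra_simps)
  qed
  then have "isCont F x" for x
    using continuous_on_interior[of "{x - 1..x + 1}" F x] by simp
  then show ?thesis
    by (simp add: continuous_at_imp_continuous_on)
qed

lemma AC_primitive_borel_measurable: "AC_primitive F f \<Longrightarrow> F \<in> borel_measurable borel"
  by (rule borel_measurable_continuous_onI[OF AC_primitive_continuous])

lemma AC_primitive_add_const: "AC_primitive F f \<Longrightarrow> AC_primitive (\<lambda>x. F x + c) f"
  by (simp add: AC_primitive_def)

lemma AC_primitive_add:
  assumes F: "AC_primitive F f" and G: "AC_primitive G g"
  shows "AC_primitive (\<lambda>x. F x + G x) (\<lambda>x. f x + g x)"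
  unfolding AC_primitive_def
proof (intro conjI allI impI)
  show "(\<lambda>x. f x + g x) absolutely_integrable_on {a..b}" for a b
    by (intro set_integral_add(1) AC_primitive_absolutely_integrable[OF F]
        AC_primitive_absolutely_integrable[OF G])
  show "F b + G b - (F a + G a) = integral {a..b} (\<lambda>x. f x + g x)" if "a \<le> b" for a b
    using AC_primitive_diff[OF F that] AC_primitive_diff[OF G that]
      integral_add[OF AC_primitive_integrable[OF F] AC_primitive_integrable[OF G]]
    by (simp add: algebra_simps)
qed

lemma AC_primitive_linear:
  assumes F: "AC_primitive F f" and h: "bounded_linear h"
  shows "AC_primitive (\<lambda>x. h (F x)) (\<lambda>x. h (f x))"
  unfolding AC_primitive_def
proof (intro conjI allI impI)
  show "(\<lambda>x. h (f x)) absolutely_integrable_on {a..b}" for a b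
    using absolutely_integrable_linear[OF AC_primitive_absolutely_integrable[OF F] h]
    by (simp add: o_def)
  show "h (F b) - h (F a) = integral {a..b} (\<lambda>x. h (f x))" if "a \<le> b" for a b
    using integral_linear[OF AC_primitive_integrable[OF F] h] AC_primitive_diff[OF F that]
      linear_diff[OF bounded_linear.linear[OF h], of "F b" "F a"]
    by (simp add: o_def)
qed

lemma AC_primitive_unique_AE:
  fixes f g :: "real \<Rightarrow> 'a::euclidean_space"
  assumes f: "AC_primitive F f" and g: "AC_primitive F g"
  shows "AE x in lborel. f x = g x"
proof -
  define h where "h x = f x - g x" for x
  have h_int: "h integrable_on cbox a b" for a b
    unfolding h_def box_real by (intro integrable_diff AC_primitive_integrable[OF f] AC_primitive_integrable[OF g])
  have h_int_0: "integral {x..y} h = 0" if "x \<le> y" for x y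
    using integral_diff[OF AC_primitive_integrable[OF f] AC_primitive_integrable[OF g]]
      AC_primitive_diff[OF f that] AC_primitive_diff[OF g that]
    by (simp add: h_def[abs_def])
  txt \<open>Lebesgue differentiation theorem for \<open>h\<close>.\<close>
  obtain N where "negligible N"
    and N: "\<And>x e. \<lbrakk>x \<notin> N; 0 < e\<rbrakk> \<Longrightarrow> \<exists>d>0. \<forall>t. 0 < t \<and> t < d \<longrightarrow>
               norm (integral (cbox x (x + t *\<^sub>R One)) h /\<^sub>R t ^ DIM(real) - h x) < e"
    using integrable_ccontinuous_explicit[of h] h_int by blast
  have "h x = 0" if "x \<notin> N" for x
  proof -
    have "norm (h x) < e" if "e > 0" for e
    proof -
      obtain d where "d > 0" and d: "\<forall>t. 0 < t \<and> t < d \<longrightarrow>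
               norm (integral (cbox x (x + t *\<^sub>R One)) h /\<^sub>R t ^ DIM(real) - h x) < e"
        using N[OF \<open>x \<notin> N\<close> \<open>e > 0\<close>] by blast
      moreover have "integral (cbox x (x + (d / 2) *\<^sub>R One)) h = 0"
        using h_int_0[of x "x + d / 2"] \<open>d > 0\<close> by simp
      ultimately show ?thesis
        using d[rule_format, of "d / 2"] by simp
    qed
    from this[of "norm (h x)"] show ?thesis
      by auto
  qed
  then have "{x. f x \<noteq> g x} \<subseteq> N"
    by (auto simp: h_def)
  then have "AE x in lebesgue. f x = g x"
    using \<open>negligible N\<close> eventually_ae_filter_negligible by blast
  then show ?thesis
    by (simp add: AE_completion_iff)
qed

lemma AC_primitive_deriv_mult_continuous:
  fixes f g :: "real \<Rightarrow> complex"
  assumes "AC_primitive F f" "continuous_on UNIV g"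
  shows "(\<lambda>x. f x * g x) absolutely_integrable_on {a..b}"
proof -
  have "(\<lambda>x. g x * f x) absolutely_integrable_on {a..b}"
  proof (rule absolutely_integrable_bounded_measurable_product[OF bilinear_times])
    have "continuous_on {a..b} g"
      using assms(2) continuous_on_subset by blast
    then show "g \<in> borel_measurable (lebesgue_on {a..b})" "bounded (g ` {a..b})"
      by (simp_all add: continuous_imp_measurable_on_sets_lebesgue compact_imp_bounded
          compact_continuous_image)
  qed (use AC_primitive_absolutely_integrable[OF assms(1)] in simp_all)
  then show ?thesis
    by (simp add: mult.commute)
qed

lemma AC_primitive_deriv_mult_integrable:
  fixes f g :: "real \<Rightarrow> complex"
  shows "AC_primitive F f \<Longrightarrow> continuous_on UNIV g \<Longrightarrow> (\<lambda>x. f x * g x) integrable_on {a..b}"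
  by (rule set_lebesgue_integral_eq_integral(1)[OF AC_primitive_deriv_mult_continuous])

lemma integral_diff_initial_segments:
  fixes f :: "real \<Rightarrow> 'a::banach"
  assumes "f integrable_on {a..b}" "a \<le> x" "x \<le> y" "y \<le> b"
  shows "integral {a..y} f - integral {a..x} f = integral {x..y} f"
proof -
  have "f integrable_on {a..y}"
    by (rule integrable_subinterval_real[OF assms(1)]) (use assms in auto)
  from Henstock_Kurzweil_Integration.integral_combine[OF assms(2,3) this] show ?thesis
    by (simp add: algebra_simps)
qed

lemma norm_integral_mult_le:
  fixes h k :: "real \<Rightarrow> complex"
  assumes "(\<lambda>t. h t * k t) integrable_on S" "(\<lambda>t. norm (h t)) integrable_on S"
    and "\<And>t. t \<in> S \<Longrightarrow> norm (k t) \<le> e"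
  shows "norm (integral S (\<lambda>t. h t * k t)) \<le> e * integral S (\<lambda>t. norm (h t))"
proof -
  have "norm (integral S (\<lambda>t. h t * k t)) \<le> integral S (\<lambda>t. e * norm (h t))"
  proof (rule integral_norm_bound_integral[OF assms(1) integrable_on_mult_right[OF assms(2)]])
    show "norm (h t * k t) \<le> e * norm (h t)" if "t \<in> S" for t
      using assms(3)[OF that] by (simp add: norm_mult mult.commute[of e] mult_left_mono)
  qed
  then show ?thesis
    by simp
qed

section \<open>Product and chain rule\<close>

lemma norm_diff_le_of_local_bound:
  fixes H :: "real \<Rightarrow> 'a::real_normed_vector" and \<rho> :: "real \<Rightarrow> real"
  assumes "a \<le> b" "d > 0"
    and local: "\<And>x y. a \<le> x \<Longrightarrow> x \<le> y \<Longrightarrow> y \<le> b \<Longrightarrow> y - x < d \<Longrightarrow> norm (H y - H x) \<le> \<rho> y - \<rho> x"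
  shows "norm (H b - H a) \<le> \<rho> b - \<rho> a"
proof -
  obtain n :: nat where n: "(b - a) / d < real n"
    using reals_Archimedean2 by blast
  have "n > 0"
    using n \<open>a \<le> b\<close> \<open>d > 0\<close> by (cases n) (auto simp: field_simps)
  define t where "t k = a + real k * (b - a) / real n" for k
  have t_0: "t 0 = a" and t_n: "t n = b"
    using \<open>n > 0\<close> by (auto simp: t_def)
  have t_step: "t (Suc k) - t k = (b - a) / real n" for k
    by (simp add: t_def diff_divide_distrib[symmetric] algebra_simps)
  have step_less: "(b - a) / real n < d"
    using n \<open>n > 0\<close> \<open>d > 0\<close> by (simp add: field_simps)
  have t_mono: "t k \<le> t (Suc k)" for k
    using t_step[of k] \<open>a \<le> b\<close> divide_nonneg_nonneg[of "b - a" "real n"] by linarith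
  have t_ge: "a \<le> t k" for k
    using \<open>a \<le> b\<close> by (simp add: t_def)
  have t_le: "t (Suc k) \<le> b" if "k < n" for k
  proof -
    have "(real k + 1) * (b - a) \<le> real n * (b - a)"
      using that \<open>a \<le> b\<close> by (intro mult_right_mono) auto
    then show ?thesis
      using \<open>n > 0\<close> by (simp add: t_def field_simps)
  qed
  have "norm (H b - H a) = norm (\<Sum>k<n. H (t (Suc k)) - H (t k))"
    using sum_lessThan_telescope[of "\<lambda>k. H (t k)" n] by (simp add: t_0 t_n)
  also have "\<dots> \<le> (\<Sum>k<n. \<rho> (t (Suc k)) - \<rho> (t k))"
    by (intro sum_norm_le local t_ge t_mono t_le) (simp_all add: t_step step_less)
  also have "\<dots> = \<rho> b - \<rho> a"
    using sum_lessThan_telescope[of "\<lambda>k. \<rho> (t k)" n] by (simp add: t_0 t_n)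
  finally show ?thesis .
qed

lemma locally_small_increments_imp_eq:
  fixes H :: "real \<Rightarrow> 'a::real_normed_vector" and \<rho> :: "real \<Rightarrow> real"
  assumes "a \<le> b"
    and small: "\<And>e. e > 0 \<Longrightarrow> \<exists>d>0. \<forall>x y. a \<le> x \<longrightarrow> x \<le> y \<longrightarrow> y \<le> b \<longrightarrow> y - x < d \<longrightarrow>
                 norm (H y - H x) \<le> e * (\<rho> y - \<rho> x)"
  shows "H b = H a"
proof -
  have bound: "norm (H b - H a) \<le> e * (\<rho> b - \<rho> a)" if "e > 0" for e
    using small[OF that] norm_diff_le_of_local_bound[OF \<open>a \<le> b\<close>, of _ H "\<lambda>x. e * \<rho> x"]
    by (auto simp: right_diff_distrib)
  have "norm (H b - H a) \<le> 0"
  proof (rule ccontr)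
    assume pos: "\<not> norm (H b - H a) \<le> 0"
    define e where "e = norm (H b - H a) / (\<bar>\<rho> b - \<rho> a\<bar> + 1)"
    have "e > 0"
      using pos by (simp add: e_def)
    have "e * (\<rho> b - \<rho> a) \<le> e * \<bar>\<rho> b - \<rho> a\<bar>"
      using \<open>e > 0\<close> by (intro mult_left_mono) auto
    also have "\<dots> < norm (H b - H a)"
      using pos by (simp add: e_def field_simps)
    finally show False
      using bound[OF \<open>e > 0\<close>] by simp
  qed
  then show ?thesis
    by simp
qed

lemma AC_primitiveI_oscillation:
  fixes F f :: "real \<Rightarrow> 'a::euclidean_space" and R :: "real \<Rightarrow> real"
    and G :: "real \<Rightarrow> 'b::metric_space"
  assumes f: "\<And>a b. f absolutely_integrable_on {a..b}"
    and R: "\<And>a b. R integrable_on {a..b}"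
    and G: "continuous_on UNIV G"
    and osc: "\<And>x y e. x \<le> y \<Longrightarrow> (\<And>s t. s \<in> {x..y} \<Longrightarrow> t \<in> {x..y} \<Longrightarrow> dist (G s) (G t) \<le> e) \<Longrightarrow>
                norm (F y - F x - integral {x..y} f) \<le> e * integral {x..y} R"
  shows "AC_primitive F f"
  unfolding AC_primitive_def
proof (intro conjI allI impI f)
  fix a b :: real
  assume "a \<le> b"
  have f_int: "f integrable_on {a..b}"
    using f set_lebesgue_integral_eq_integral(1) by blast
  have "(\<lambda>x. F x - integral {a..x} f) b = (\<lambda>x. F x - integral {a..x} f) a"
  proof (rule locally_small_increments_imp_eq[OF \<open>a \<le> b\<close>, where \<rho> = "\<lambda>x. integral {a..x} R"])
    fix e :: real
    assume "e > 0"
    have "uniformly_continuous_on {a..b} G"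
      using G by (intro compact_uniformly_continuous continuous_on_subset[OF G]) auto
    then obtain d where "d > 0"
      and d: "\<And>s t. s \<in> {a..b} \<Longrightarrow> t \<in> {a..b} \<Longrightarrow> dist s t < d \<Longrightarrow> dist (G s) (G t) < e"
      using \<open>e > 0\<close> unfolding uniformly_continuous_on_def by metis
    show "\<exists>d>0. \<forall>x y. a \<le> x \<longrightarrow> x \<le> y \<longrightarrow> y \<le> b \<longrightarrow> y - x < d \<longrightarrow>
            norm (F y - integral {a..y} f - (F x - integral {a..x} f))
              \<le> e * (integral {a..y} R - integral {a..x} R)"
    proof (intro exI[of _ d] conjI allI impI \<open>d > 0\<close>)
      fix x y
      assume xy: "a \<le> x" "x \<le> y" "y \<le> b" "y - x < d"
      have "dist (G s) (G t) \<le> e" if "s \<in> {x..y}" "t \<in> {x..y}" for s t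
        using that xy by (intro less_imp_le d) (auto simp: dist_real_def)
      then have "norm (F y - F x - integral {x..y} f) \<le> e * integral {x..y} R"
        by (rule osc[OF xy(2)])
      moreover have "F y - integral {a..y} f - (F x - integral {a..x} f) = F y - F x - integral {x..y} f"
        using integral_diff_initial_segments[OF f_int xy(1-3)] by (simp add: algebra_simps)
      ultimately show "norm (F y - integral {a..y} f - (F x - integral {a..x} f))
              \<le> e * (integral {a..y} R - integral {a..x} R)"
        by (simp only: integral_diff_initial_segments[OF R xy(1-3)])
    qed
  qed
  then show "F b - F a = integral {a..b} f"
    by (simp add: algebra_simps)
qed

lemma AC_primitive_mult_increment:
  fixes f g :: "real \<Rightarrow> complex"
  assumes f: "AC_primitive f f'" and g: "AC_primitive g g'" and "x \<le> y"
  shows "f y * g y - f x * g x - integral {x..y} (\<lambda>t. f' t * g t + f t * g' t)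
    = integral {x..y} (\<lambda>t. f' t * (g y - g t)) + integral {x..y} (\<lambda>t. g' t * (f x - f t))"
proof -
  have f'g: "(\<lambda>t. f' t * g t) integrable_on {x..y}" and g'f: "(\<lambda>t. g' t * f t) integrable_on {x..y}"
    using f g by (simp_all add: AC_primitive_deriv_mult_integrable AC_primitive_continuous)
  have "integral {x..y} (\<lambda>t. f' t * (g y - g t)) + integral {x..y} (\<lambda>t. g' t * (f x - f t))
      = (integral {x..y} f' * g y - integral {x..y} (\<lambda>t. f' t * g t))
        + (integral {x..y} g' * f x - integral {x..y} (\<lambda>t. g' t * f t))"
    using integral_diff[OF integrable_on_mult_left[OF AC_primitive_integrable[OF f]] f'g, of "g y"]
      integral_diff[OF integrable_on_mult_left[OF AC_primitive_integrable[OF g]] g'f, of "f x"]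
    by (simp add: right_diff_distrib)
  also have "\<dots> = f y * g y - f x * g x - integral {x..y} (\<lambda>t. f' t * g t + f t * g' t)"
    using AC_primitive_diff[OF f \<open>x \<le> y\<close>] AC_primitive_diff[OF g \<open>x \<le> y\<close>] integral_add[OF f'g g'f]
    by (simp add: algebra_simps)
  finally show ?thesis
    by simp
qed

lemma AC_primitive_mult:
  fixes f g :: "real \<Rightarrow> complex"
  assumes f: "AC_primitive f f'" and g: "AC_primitive g g'"
  shows "AC_primitive (\<lambda>x. f x * g x) (\<lambda>x. f' x * g x + f x * g' x)"
proof (rule AC_primitiveI_oscillation[where R = "\<lambda>t. norm (f' t) + norm (g' t)" and G = "\<lambda>t. (f t, g t)"])
  show "(\<lambda>x. f' x * g x + f x * g' x) absolutely_integrable_on {a..b}" for a b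
    using f g by (intro set_integral_add(1))
      (simp_all add: AC_primitive_deriv_mult_continuous AC_primitive_continuous mult.commute[of "f _"])
  show "(\<lambda>t. norm (f' t) + norm (g' t)) integrable_on {a..b}" for a b
    by (intro integrable_add AC_primitive_norm_integrable[OF f] AC_primitive_norm_integrable[OF g])
  show "continuous_on UNIV (\<lambda>t. (f t, g t))"
    using f g by (intro continuous_on_Pair AC_primitive_continuous)
  fix x y e :: real
  assume "x \<le> y" and osc: "\<And>s t. s \<in> {x..y} \<Longrightarrow> t \<in> {x..y} \<Longrightarrow> dist (f s, g s) (f t, g t) \<le> e"
  have f_osc: "norm (f x - f t) \<le> e" and g_osc: "norm (g y - g t) \<le> e" if "t \<in> {x..y}" for t
    using osc[of x t] osc[of y t] that \<open>x \<le> y\<close> dist_fst_le[of "(f x, g x)" "(f t, g t)"]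
      dist_snd_le[of "(f y, g y)" "(f t, g t)"]
    by (auto simp: dist_norm)
  have f_cont: "continuous_on UNIV f" and g_cont: "continuous_on UNIV g"
    using f g by (simp_all add: AC_primitive_continuous)
  have "norm (integral {x..y} (\<lambda>t. f' t * (g y - g t))) \<le> e * integral {x..y} (\<lambda>t. norm (f' t))"
    by (intro norm_integral_mult_le AC_primitive_deriv_mult_integrable[OF f]
        AC_primitive_norm_integrable[OF f] g_osc continuous_intros g_cont)
  moreover have "norm (integral {x..y} (\<lambda>t. g' t * (f x - f t))) \<le> e * integral {x..y} (\<lambda>t. norm (g' t))"
    by (intro norm_integral_mult_le AC_primitive_deriv_mult_integrable[OF g]
        AC_primitive_norm_integrable[OF g] f_osc continuous_intros f_cont)
  moreover have "integral {x..y} (\<lambda>t. norm (f' t) + norm (g' t))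
      = integral {x..y} (\<lambda>t. norm (f' t)) + integral {x..y} (\<lambda>t. norm (g' t))"
    by (intro integral_add AC_primitive_norm_integrable[OF f] AC_primitive_norm_integrable[OF g])
  ultimately show "norm (f y * g y - f x * g x - integral {x..y} (\<lambda>x. f' x * g x + f x * g' x))
      \<le> e * integral {x..y} (\<lambda>t. norm (f' t) + norm (g' t))"
    unfolding AC_primitive_mult_increment[OF f g \<open>x \<le> y\<close>]
    by (smt (verit) distrib_left norm_triangle_ineq)
qed

lemma norm_exp_i_remainder_le:
  assumes "\<bar>d\<bar> \<le> e"
  shows "cmod (exp (\<i> * of_real d) - 1 - \<i> * of_real d) \<le> e * \<bar>d\<bar>"
proof -
  have "cmod (exp (\<i> * of_real d) - 1 - \<i> * of_real d) \<le> \<bar>d\<bar> * \<bar>d\<bar> / 2"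
    using iexp_approx1[of d 1] by (simp add: numeral_2_eq_2 algebra_simps)
  moreover have "\<bar>d\<bar> * \<bar>d\<bar> \<le> e * \<bar>d\<bar>"
    by (rule mult_right_mono[OF assms]) simp
  moreover have "0 \<le> e * \<bar>d\<bar>"
    using assms by (meson abs_ge_zero mult_nonneg_nonneg order_trans)
  ultimately show ?thesis
    by linarith
qed

lemma exp_i_increment:
  fixes \<theta> :: "real \<Rightarrow> real"
  assumes T': "AC_primitive (\<lambda>x. \<i> * of_real (\<theta> x)) T'" and "x \<le> y"
    and T'E: "(\<lambda>t. T' t * exp (\<i> * of_real (\<theta> t))) integrable_on {x..y}"
  defines "E \<equiv> \<lambda>t. exp (\<i> * of_real (\<theta> t))" and "D \<equiv> \<theta> y - \<theta> x"
  shows "E y - E x - integral {x..y} (\<lambda>t. T' t * E t)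
    = E x * (exp (\<i> * of_real D) - 1 - \<i> * of_real D) + integral {x..y} (\<lambda>t. T' t * (E x - E t))"
proof -
  have "integral {x..y} (\<lambda>t. T' t * (E x - E t)) = integral {x..y} T' * E x - integral {x..y} (\<lambda>t. T' t * E t)"
    using integral_diff[OF integrable_on_mult_left[OF AC_primitive_integrable[OF T']] T'E, of "E x"]
    by (simp add: E_def right_diff_distrib)
  also have "integral {x..y} T' = \<i> * of_real D"
    using AC_primitive_diff[OF T' \<open>x \<le> y\<close>] by (simp add: D_def algebra_simps)
  moreover have "E y = E x * exp (\<i> * of_real D)"
    by (simp add: E_def D_def algebra_simps flip: exp_add)
  ultimately show ?thesis
    by (simp add: algebra_simps)
qed

lemma AC_primitive_exp_i:
  fixes \<theta> \<theta>' :: "real \<Rightarrow> real"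
  assumes \<theta>: "AC_primitive \<theta> \<theta>'"
  shows "AC_primitive (\<lambda>x. exp (\<i> * of_real (\<theta> x)))
           (\<lambda>x. \<i> * of_real (\<theta>' x) * exp (\<i> * of_real (\<theta> x)))"
    (is "AC_primitive ?E (\<lambda>x. ?T' x * ?E x)")
proof (rule AC_primitiveI_oscillation[where R = "\<lambda>t. 2 * norm (?T' t)" and G = "\<lambda>t. (?E t, \<theta> t)"])
  have T': "AC_primitive (\<lambda>x. \<i> * of_real (\<theta> x)) ?T'"
    using bounded_linear_mult_right bounded_linear_of_real
    by (intro AC_primitive_linear[OF AC_primitive_linear[OF \<theta>]])
  have \<theta>_cont: "continuous_on UNIV \<theta>"
    by (rule AC_primitive_continuous[OF \<theta>])
  show "continuous_on UNIV (\<lambda>t. (?E t, \<theta> t))"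
    by (intro continuous_intros \<theta>_cont)
  show T'E: "(\<lambda>x. ?T' x * ?E x) absolutely_integrable_on {a..b}" for a b
    by (intro AC_primitive_deriv_mult_continuous[OF T'] continuous_intros \<theta>_cont)
  show "(\<lambda>t. 2 * norm (?T' t)) integrable_on {a..b}" for a b
    by (intro integrable_on_mult_right AC_primitive_norm_integrable[OF T'])
  fix x y e :: real
  assume "x \<le> y" and osc: "\<And>s t. s \<in> {x..y} \<Longrightarrow> t \<in> {x..y} \<Longrightarrow> dist (?E s, \<theta> s) (?E t, \<theta> t) \<le> e"
  have E_osc: "norm (?E x - ?E t) \<le> e" if "t \<in> {x..y}" for t
    using osc[of x t] that \<open>x \<le> y\<close> dist_fst_le[of "(?E x, \<theta> x)" "(?E t, \<theta> t)"] by (auto simp: dist_norm)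
  have D: "\<bar>\<theta> y - \<theta> x\<bar> \<le> e"
    using osc[of y x] \<open>x \<le> y\<close> dist_snd_le[of "(?E y, \<theta> y)" "(?E x, \<theta> x)"] by (auto simp: dist_real_def)
  have "integral {x..y} ?T' = \<i> * of_real (\<theta> y - \<theta> x)"
    using AC_primitive_diff[OF T' \<open>x \<le> y\<close>] by (simp add: algebra_simps)
  then have "\<bar>\<theta> y - \<theta> x\<bar> = norm (integral {x..y} ?T')"
    by (simp only: norm_mult norm_ii norm_of_real mult_1)
  also have "\<dots> \<le> integral {x..y} (\<lambda>t. norm (?T' t))"
    by (intro integral_norm_bound_integral AC_primitive_integrable[OF T'] AC_primitive_norm_integrable[OF T']) simp
  finally have "e * \<bar>\<theta> y - \<theta> x\<bar> \<le> e * integral {x..y} (\<lambda>t. norm (?T' t))"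
    using D by (intro mult_left_mono) auto
  then have "norm (?E x * (exp (\<i> * of_real (\<theta> y - \<theta> x)) - 1 - \<i> * of_real (\<theta> y - \<theta> x)))
      \<le> e * integral {x..y} (\<lambda>t. norm (?T' t))" (is "norm ?A \<le> _")
    using norm_exp_i_remainder_le[OF D] by (simp add: norm_mult)
  moreover have "norm (integral {x..y} (\<lambda>t. ?T' t * (?E x - ?E t))) \<le> e * integral {x..y} (\<lambda>t. norm (?T' t))"
    (is "norm ?B \<le> _")
    by (intro norm_integral_mult_le AC_primitive_deriv_mult_integrable[OF T'] AC_primitive_norm_integrable[OF T']
        E_osc) (intro continuous_intros \<theta>_cont)
  ultimately have "norm (?A + ?B) \<le> 2 * (e * integral {x..y} (\<lambda>t. norm (?T' t)))"
    using norm_triangle_ineq[of ?A ?B] by linarith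
  then show "norm (?E y - ?E x - integral {x..y} (\<lambda>t. ?T' t * ?E t))
      \<le> e * integral {x..y} (\<lambda>t. 2 * norm (?T' t))"
    unfolding exp_i_increment[OF T' \<open>x \<le> y\<close> set_lebesgue_integral_eq_integral(1)[OF T'E]]
    by (simp add: algebra_simps)
qed

section \<open>Multipliers of \<open>L\<^sup>2\<close> and \<open>H\<^sup>1\<close>\<close>

lemma set_integrable_lborel_iff_lebesgue:
  fixes f :: "real \<Rightarrow> 'a::euclidean_space"
  assumes [measurable]: "f \<in> borel_measurable lborel" "S \<in> sets lborel"
  shows "set_integrable lborel S f \<longleftrightarrow> f absolutely_integrable_on S"
  using integrable_completion[of "\<lambda>x. indicator S x *\<^sub>R f x"]
  by (simp add: set_integrable_def)

lemma AC_primitive_iff_lborel: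
  fixes F f :: "real \<Rightarrow> 'a::euclidean_space"
  assumes "f \<in> borel_measurable lborel"
  shows "AC_primitive F f \<longleftrightarrow> (\<forall>a b. set_integrable lborel {a..b} f) \<and>
           (\<forall>a b. a \<le> b \<longrightarrow> F b - F a = (LINT t:{a..b}|lborel. f t))"
proof -
  have "set_integrable lborel {a..b} f \<longleftrightarrow> f absolutely_integrable_on {a..b}" for a b
    by (rule set_integrable_lborel_iff_lebesgue[OF assms]) simp
  then show ?thesis
    unfolding AC_primitive_def by (auto simp: set_borel_integral_eq_integral(2))
qed

lemma H1_deriv_iff_AC_primitive:
  "H1_deriv u u' \<longleftrightarrow> L2v u' \<and> (\<forall>i. AC_primitive (\<lambda>x. u x $ i) (\<lambda>x. u' x $ i))"
proof -
  have "(\<lambda>x. u' x $ i) \<in> borel_measurable lborel" if "L2v u'" for i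
    using that by (simp add: L2v_def L2_def)
  then show ?thesis
    unfolding H1_deriv_def by (auto simp: AC_primitive_iff_lborel)
qed

lemma H1_deriv_unique_AE:
  assumes "H1_deriv u v" "H1_deriv u w"
  shows "AE x in lborel. v x = w x"
proof -
  have "AE x in lborel. v x $ i = w x $ i" for i
    using assms by (intro AC_primitive_unique_AE) (auto simp: H1_deriv_iff_AC_primitive)
  from this[of 1] this[of 2] show ?thesis
    by eventually_elim (simp add: vec_eq_iff forall_2)
qed

lemma L2_add:
  assumes f: "L2 f" and g: "L2 g"
  shows "L2 (\<lambda>x. f x + g x)"
proof -
  have [measurable]: "f \<in> borel_measurable lborel" "g \<in> borel_measurable lborel"
    using f g by (simp_all add: L2_def)
  have bound_sq: "(cmod (f x + g x))\<^sup>2 \<le> 2 * (cmod (f x))\<^sup>2 + 2 * (cmod (g x))\<^sup>2" for x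
  proof -
    have "(cmod (f x + g x))\<^sup>2 \<le> (cmod (f x) + cmod (g x))\<^sup>2"
      by (intro power_mono norm_triangle_ineq) simp
    then show ?thesis
      using zero_le_power2[of "cmod (f x) - cmod (g x)"] unfolding power2_sum power2_diff by linarith
  qed
  have "integrable lborel (\<lambda>x. (cmod (f x + g x))\<^sup>2)"
  proof (rule Bochner_Integration.integrable_bound)
    show "integrable lborel (\<lambda>x. 2 * (cmod (f x))\<^sup>2 + 2 * (cmod (g x))\<^sup>2)"
      using f g unfolding L2_def by (intro Bochner_Integration.integrable_add integrable_mult_right) auto
    show "AE x in lborel. norm ((cmod (f x + g x))\<^sup>2) \<le> norm (2 * (cmod (f x))\<^sup>2 + 2 * (cmod (g x))\<^sup>2)"
      using bound_sq by simp
  qed measurable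
  then show ?thesis
    by (simp add: L2_def)
qed

lemma L2_bounded_mult:
  assumes f: "L2 f" and [measurable]: "\<alpha> \<in> borel_measurable lborel"
    and bound: "AE x in lborel. cmod (\<alpha> x) \<le> C"
  shows "L2 (\<lambda>x. \<alpha> x * f x)"
proof -
  have [measurable]: "f \<in> borel_measurable lborel"
    using f by (simp add: L2_def)
  have bound_sq: "AE x in lborel. (cmod (\<alpha> x * f x))\<^sup>2 \<le> C\<^sup>2 * (cmod (f x))\<^sup>2"
    using bound
  proof eventually_elim
    case (elim x)
    then have "(cmod (\<alpha> x))\<^sup>2 \<le> C\<^sup>2"
      by (intro power_mono) simp_all
    then show ?case
      by (simp add: norm_mult power_mult_distrib mult_right_mono)
  qed
  have "integrable lborel (\<lambda>x. (cmod (\<alpha> x * f x))\<^sup>2)"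
  proof (rule Bochner_Integration.integrable_bound)
    show "integrable lborel (\<lambda>x. C\<^sup>2 * (cmod (f x))\<^sup>2)"
      using f unfolding L2_def by (intro integrable_mult_right) auto
    show "AE x in lborel. norm ((cmod (\<alpha> x * f x))\<^sup>2) \<le> norm (C\<^sup>2 * (cmod (f x))\<^sup>2)"
      using bound_sq by eventually_elim simp
  qed measurable
  then show ?thesis
    by (simp add: L2_def)
qed

lemma L2v_add: "L2v u \<Longrightarrow> L2v v \<Longrightarrow> L2v (\<lambda>x. u x + v x)"
  by (simp add: L2v_def L2_add)

lemma matrix_vector_mult_2:
  fixes A :: "'a::semiring_1^2^2"
  shows "(A *v y) $ i = A $ i $ 1 * y $ 1 + A $ i $ 2 * y $ 2"
  by (simp add: matrix_vector_mult_def sum_2)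

lemma L2v_bounded_matrix_mult:
  fixes A :: "real \<Rightarrow> complex^2^2"
  assumes A: "A \<in> borel_measurable lborel" and bound: "AE x in lborel. norm (A x) \<le> C"
    and u: "L2v u"
  shows "L2v (\<lambda>x. A x *v u x)"
proof -
  have entry_measurable: "(\<lambda>x. A x $ i $ j) \<in> borel_measurable lborel" for i j
    by (rule measurable_compose[OF A borel_measurable_continuous_onI]) (intro continuous_intros)
  have entry_bound: "AE x in lborel. cmod (A x $ i $ j) \<le> C" for i j
    using bound by eventually_elim (meson Finite_Cartesian_Product.norm_nth_le order_trans)
  show ?thesis
    unfolding L2v_def matrix_vector_mult_2
  proof
    fix i
    show "L2 (\<lambda>x. A x $ i $ 1 * u x $ 1 + A x $ i $ 2 * u x $ 2)"
      using u unfolding L2v_def by (intro L2_add L2_bounded_mult[OF _ entry_measurable entry_bound]) auto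
  qed
qed

definition W1_inf :: "(real \<Rightarrow> 'a::euclidean_space) \<Rightarrow> (real \<Rightarrow> 'a) \<Rightarrow> bool" where
  "W1_inf F F' \<longleftrightarrow> AC_primitive F F' \<and> bounded (range F) \<and>
     F' \<in> borel_measurable lborel \<and> (\<exists>C. AE x in lborel. norm (F' x) \<le> C)"

lemma W1_inf_linear:
  assumes F: "W1_inf F F'" and h: "bounded_linear h"
  shows "W1_inf (\<lambda>x. h (F x)) (\<lambda>x. h (F' x))"
proof -
  obtain C where C: "AE x in lborel. norm (F' x) \<le> C"
    using F by (auto simp: W1_inf_def)
  obtain K where K: "\<And>y. norm (h y) \<le> norm y * K" and "K > 0"
    using bounded_linear.pos_bounded[OF h] by blast
  have "AE x in lborel. norm (h (F' x)) \<le> C * K"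
    using C
  proof eventually_elim
    case (elim x)
    have "norm (h (F' x)) \<le> norm (F' x) * K"
      by (rule K)
    also have "\<dots> \<le> C * K"
      using elim \<open>K > 0\<close> by (intro mult_right_mono) auto
    finally show ?case .
  qed
  moreover have "bounded (range (\<lambda>x. h (F x)))"
    using bounded_linear_image[OF _ h, of "range F"] F unfolding W1_inf_def image_image by blast
  moreover have "(\<lambda>x. h (F' x)) \<in> borel_measurable lborel"
    using F by (intro measurable_compose[OF _ borel_measurable_continuous_onI[OF linear_continuous_on[OF h]]])
      (simp add: W1_inf_def)
  moreover have "AC_primitive (\<lambda>x. h (F x)) (\<lambda>x. h (F' x))"
    using F by (intro AC_primitive_linear[OF _ h]) (simp add: W1_inf_def)
  ultimately show ?thesis
    unfolding W1_inf_def by blast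
qed

lemma W1_inf_exp_i:
  fixes \<theta> \<theta>' :: "real \<Rightarrow> real"
  assumes \<theta>: "AC_primitive \<theta> \<theta>'" and \<theta>'_bounded: "ess_bounded \<theta>'"
  shows "W1_inf (\<lambda>x. exp (\<i> * of_real (\<theta> x))) (\<lambda>x. \<i> * of_real (\<theta>' x) * exp (\<i> * of_real (\<theta> x)))"
proof -
  obtain C where C: "AE x in lborel. \<bar>\<theta>' x\<bar> \<le> C" and [measurable]: "\<theta>' \<in> borel_measurable borel"
    using \<theta>'_bounded by (auto simp: ess_bounded_def)
  have [measurable]: "\<theta> \<in> borel_measurable borel"
    by (rule AC_primitive_borel_measurable[OF \<theta>])
  have "bounded (range (\<lambda>x. exp (\<i> * of_real (\<theta> x))))"
    by (rule boundedI[where B = 1]) auto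
  moreover have "AE x in lborel. norm (\<i> * of_real (\<theta>' x) * exp (\<i> * of_real (\<theta> x))) \<le> C"
    using C by (simp add: norm_mult)
  ultimately show ?thesis
    unfolding W1_inf_def using AC_primitive_exp_i[OF \<theta>] by auto
qed

lemma W1_inf_mult_L2v:
  fixes A :: "real \<Rightarrow> complex^2^2"
  assumes A: "W1_inf A A'" and u: "L2v u"
  shows "L2v (\<lambda>x. A x *v u x)"
proof -
  obtain C where "\<And>x. norm (A x) \<le> C"
    using A by (auto simp: W1_inf_def bounded_iff)
  moreover have "A \<in> borel_measurable lborel"
    using A AC_primitive_borel_measurable by (auto simp: W1_inf_def)
  ultimately show ?thesis
    using L2v_bounded_matrix_mult[OF _ _ u] by blast
qed

lemma W1_inf_mult_H1_deriv:
  fixes A :: "real \<Rightarrow> complex^2^2"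
  assumes A: "W1_inf A A'" and u: "L2v u" "H1_deriv u u'"
  shows "H1_deriv (\<lambda>x. A x *v u x) (\<lambda>x. A' x *v u x + A x *v u' x)"
  unfolding H1_deriv_iff_AC_primitive
proof (intro conjI allI)
  obtain C where "AE x in lborel. norm (A' x) \<le> C"
    using A by (auto simp: W1_inf_def)
  moreover have "L2v u'"
    using u(2) by (simp add: H1_deriv_iff_AC_primitive)
  moreover have "A' \<in> borel_measurable lborel"
    using A by (simp add: W1_inf_def)
  ultimately show "L2v (\<lambda>x. A' x *v u x + A x *v u' x)"
    using L2v_add[OF L2v_bounded_matrix_mult[OF _ _ u(1)] W1_inf_mult_L2v[OF A]] by blast
  have entry: "AC_primitive (\<lambda>x. A x $ i $ j) (\<lambda>x. A' x $ i $ j)" for i j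
  proof -
    have "AC_primitive (\<lambda>x. A x $ i) (\<lambda>x. A' x $ i)"
      using A by (intro AC_primitive_linear[OF _ bounded_linear_vec_nth]) (simp add: W1_inf_def)
    then show ?thesis
      by (rule AC_primitive_linear[OF _ bounded_linear_vec_nth])
  qed
  have component: "AC_primitive (\<lambda>x. u x $ j) (\<lambda>x. u' x $ j)" for j
    using u(2) by (simp add: H1_deriv_iff_AC_primitive)
  fix i
  show "AC_primitive (\<lambda>x. (A x *v u x) $ i) (\<lambda>x. (A' x *v u x + A x *v u' x) $ i)"
    unfolding matrix_vector_mult_2 vector_add_component
    using AC_primitive_add[OF AC_primitive_mult[OF entry component] AC_primitive_mult[OF entry component],
        of i 1 1 i 2 2]
    by (simp add: algebra_simps)
qed

lemma W1_inf_mult_L2set: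
  fixes A :: "real \<Rightarrow> complex^2^2"
  assumes "W1_inf A A'" "u \<in> L2set"
  shows "(\<lambda>x. A x *v u x) \<in> L2set"
  using assms W1_inf_mult_L2v unfolding L2set_def by blast

lemma W1_inf_mult_H1set:
  fixes A :: "real \<Rightarrow> complex^2^2"
  assumes "W1_inf A A'" "u \<in> H1set"
  shows "(\<lambda>x. A x *v u x) \<in> H1set"
  using assms W1_inf_mult_L2v W1_inf_mult_H1_deriv unfolding H1set_def by blast

lemma bij_betw_pointwise_matrix_mult:
  assumes "\<And>x y. B x *v (A x *v y) = y" "\<And>x y. A x *v (B x *v y) = y"
    and "\<And>u. u \<in> S \<Longrightarrow> (\<lambda>x. A x *v u x) \<in> S" "\<And>u. u \<in> S \<Longrightarrow> (\<lambda>x. B x *v u x) \<in> S"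
  shows "bij_betw (\<lambda>u x. A x *v u x) S S"
  by (rule bij_betw_byWitness[where f' = "\<lambda>u x. B x *v u x"]) (auto simp: assms)

section \<open>The unitary matrix \<open>M\<close>\<close>

lemma vec2_nth [simp]: "vec2 a b $ 1 = a" "vec2 a b $ 2 = b"
  by (simp_all add: vec2_def)

lemma mat2_mult_vec: "mat2 a b c d *v y = vec2 (a * y $ 1 + b * y $ 2) (c * y $ 1 + d * y $ 2)"
  by (simp add: vec_eq_iff forall_2 matrix_vector_mult_def sum_2 mat2_def vec2_def)

lemma adjoint_mat2: "adjoint_mat (mat2 a b c d) = mat2 (cnj a) (cnj c) (cnj b) (cnj d)"
  by (simp add: vec_eq_iff forall_2 adjoint_mat_def mat2_def vec2_def)

lemma bounded_linear_adjoint_mat: "bounded_linear (adjoint_mat :: complex^'n^'n \<Rightarrow> _)"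
  unfolding linear_conv_bounded_linear[symmetric]
  by (rule linearI) (simp_all add: adjoint_mat_def vec_eq_iff scaleR_conv_of_real[where 'a = complex])

lemma bij_betw_unitary_W1_inf_mult:
  fixes A :: "real \<Rightarrow> complex^2^2"
  assumes A: "W1_inf A A'"
    and unitary: "\<And>x y. adjoint_mat (A x) *v (A x *v y) = y" "\<And>x y. A x *v (adjoint_mat (A x) *v y) = y"
  shows "bij_betw (\<lambda>u x. A x *v u x) L2set L2set" and "bij_betw (\<lambda>u x. A x *v u x) H1set H1set"
proof -
  have A_adj: "W1_inf (\<lambda>x. adjoint_mat (A x)) (\<lambda>x. adjoint_mat (A' x))"
    using A bounded_linear_adjoint_mat by (rule W1_inf_linear)
  show "bij_betw (\<lambda>u x. A x *v u x) L2set L2set"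
    by (rule bij_betw_pointwise_matrix_mult[OF unitary W1_inf_mult_L2set[OF A] W1_inf_mult_L2set[OF A_adj]])
  show "bij_betw (\<lambda>u x. A x *v u x) H1set H1set"
    by (rule bij_betw_pointwise_matrix_mult[OF unitary W1_inf_mult_H1set[OF A] W1_inf_mult_H1set[OF A_adj]])
qed

text \<open>Real-linear in \<open>z\<close>, so the derivative of \<open>phase_mat (E x)\<close> is \<open>phase_mat (E' x)\<close>.\<close>

definition phase_mat :: "complex \<Rightarrow> complex^2^2" where
  "phase_mat z = (let s = complex_of_real (sqrt 2) in mat2 (cnj z / s) (z / s) (cnj z / s) (- z / s))"

lemma bounded_linear_phase_mat: "bounded_linear phase_mat"
  unfolding linear_conv_bounded_linear[symmetric]
  by (rule linearI) (simp_all add: phase_mat_def Let_def mat2_def vec2_def vec_eq_iff forall_2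
      scaleR_conv_of_real[where 'a = complex] field_simps)

lemma cnj_eq_inverse_if_norm_1: "cmod z = 1 \<Longrightarrow> cnj z = inverse z"
  using complex_norm_square[of z] inverse_unique[of z "cnj z"] by simp

lemma phase_mat_unitary:
  assumes "cmod z = 1"
  shows "adjoint_mat (phase_mat z) *v (phase_mat z *v y) = y"
    and "phase_mat z *v (adjoint_mat (phase_mat z) *v y) = y"
proof -
  have "z \<noteq> 0"
    using assms by auto
  define s where "s = complex_of_real (sqrt 2)"
  have "s * s = 2" and "s \<noteq> 0" and "cnj s = s"
    by (simp_all add: s_def flip: of_real_mult)
  then show "adjoint_mat (phase_mat z) *v (phase_mat z *v y) = y"
      and "phase_mat z *v (adjoint_mat (phase_mat z) *v y) = y"
    unfolding phase_mat_def Let_def s_def[symmetric] adjoint_mat2 mat2_mult_vec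
    using \<open>z \<noteq> 0\<close>
    by (simp_all add: vec_eq_iff forall_2 cnj_eq_inverse_if_norm_1[OF assms] field_simps)
qed

lemma phase_mat_intertwining:
  fixes z :: complex and c r :: real and y y' :: "complex^2"
  assumes z: "cmod z = 1"
  defines "w \<equiv> phase_mat z *v y"
    and "w' \<equiv> phase_mat (\<i> * of_real c * z) *v y + phase_mat z *v y'"
  shows "vec2 (\<i> * y' $ 1 - \<i> * (\<i> * of_real r * z\<^sup>2) * y $ 2)
              (\<i> * cnj (\<i> * of_real r * z\<^sup>2) * y $ 1 - \<i> * y' $ 2)
       = adjoint_mat (phase_mat z) *v
           vec2 (- of_real (c - r) * w $ 1 + \<i> * w' $ 2) (\<i> * w' $ 1 - of_real (c + r) * w $ 2)"
proof -
  have "z \<noteq> 0"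
    using z by auto
  define s where "s = complex_of_real (sqrt 2)"
  have s: "s * s = 2" and "s \<noteq> 0" and cnj_s: "cnj s = s"
    by (simp_all add: s_def flip: of_real_mult)
  show ?thesis
    unfolding w_def w'_def phase_mat_def Let_def s_def[symmetric] adjoint_mat2 mat2_mult_vec
    using \<open>z \<noteq> 0\<close> \<open>s \<noteq> 0\<close> s
    by (simp add: vec_eq_iff forall_2 cnj_eq_inverse_if_norm_1[OF z] cnj_s field_simps power2_eq_square)
      algebra
qed

definition half_phase :: "(real \<Rightarrow> real) \<Rightarrow> real \<Rightarrow> complex" where
  "half_phase phi x = exp (\<i> * of_real ((phi x - pi / 2) / 2))"

lemma norm_half_phase [simp]: "cmod (half_phase phi x) = 1"
  by (simp add: half_phase_def)

lemma Mmat_eq_phase_mat: "Mmat phi x = phase_mat (half_phase phi x)"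
  by (simp add: Mmat_def phase_mat_def half_phase_def Let_def exp_cnj)

lemma polar_form_half_phase:
  assumes "z = of_real (cmod z) * exp (\<i> * of_real (phi x))"
  shows "z = \<i> * of_real (cmod z) * (half_phase phi x)\<^sup>2"
proof -
  have "(half_phase phi x)\<^sup>2 = cis ((phi x - pi / 2) / 2 + (phi x - pi / 2) / 2)"
    by (simp only: half_phase_def power2_eq_square cis_mult flip: cis_conv_exp)
  also have "\<dots> = cis (phi x + - (pi / 2))"
    by (rule arg_cong[where f = cis]) simp
  also have "\<dots> = cis (phi x) * cis (- (pi / 2))"
    by (simp only: cis_mult)
  also have "cis (- (pi / 2)) = - \<i>"
    by (simp add: complex_eq_iff)
  finally show ?thesis
    by (subst assms) (simp add: cis_conv_exp algebra_simps)
qed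

lemma W1_inf_half_phase:
  assumes "loc_AC_with_deriv phi dphi" and dphi: "ess_bounded dphi"
  shows "W1_inf (half_phase phi) (\<lambda>x. \<i> * of_real (dphi x / 2) * half_phase phi x)"
proof -
  obtain C where "AE x in lborel. \<bar>dphi x\<bar> \<le> C" and [measurable]: "dphi \<in> borel_measurable lborel"
    using dphi by (auto simp: ess_bounded_def)
  then have "ess_bounded (\<lambda>x. dphi x / 2)"
    unfolding ess_bounded_def by (intro conjI exI[of _ "C / 2"]) auto
  moreover have "AC_primitive phi dphi"
    using assms by (simp add: loc_AC_with_deriv_def AC_primitive_iff_lborel)
  then have "AC_primitive (\<lambda>x. phi x + - (pi / 2)) dphi"
    by (rule AC_primitive_add_const)
  then have "AC_primitive (\<lambda>x. (phi x - pi / 2) / 2) (\<lambda>x. dphi x / 2)"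
    using AC_primitive_linear[OF _ bounded_linear_divide[of 2]] by fastforce
  ultimately show ?thesis
    unfolding half_phase_def[abs_def] by (intro W1_inf_exp_i)
qed

lemma Lax_op_eq_adjoint_calL_op:
  assumes polar: "q x = of_real (cmod (q x)) * exp (\<i> * of_real (phi x))"
    and v': "v' x = phase_mat (\<i> * of_real (dphi x / 2) * half_phase phi x) *v u x + Mmat phi x *v u' x"
  shows "Lax_op q u u' x = adjoint_mat (Mmat phi x) *v
           calL_op (\<lambda>x. dphi x / 2 - cmod (q x)) (\<lambda>x. dphi x / 2 + cmod (q x))
             (\<lambda>y. Mmat phi y *v u y) v' x"
proof -
  define r where "r = cmod (q x)"
  have q: "q x = \<i> * of_real r * (half_phase phi x)\<^sup>2"
    unfolding r_def by (rule polar_form_half_phase[where phi = phi and x = x, OF polar])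
  have "Lax_op q u u' x = vec2 (\<i> * u' x $ 1 - \<i> * (\<i> * of_real r * (half_phase phi x)\<^sup>2) * u x $ 2)
      (\<i> * cnj (\<i> * of_real r * (half_phase phi x)\<^sup>2) * u x $ 1 - \<i> * u' x $ 2)"
    unfolding Lax_op_def q ..
  also have "\<dots> = adjoint_mat (phase_mat (half_phase phi x)) *v
      vec2 (- of_real (dphi x / 2 - r) * (phase_mat (half_phase phi x) *v u x) $ 1 + \<i> * v' x $ 2)
           (\<i> * v' x $ 1 - of_real (dphi x / 2 + r) * (phase_mat (half_phase phi x) *v u x) $ 2)"
    unfolding v' Mmat_eq_phase_mat by (rule phase_mat_intertwining[OF norm_half_phase])
  finally show ?thesis
    by (simp add: calL_op_def Mmat_eq_phase_mat r_def)
qed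

theorem lemma2p1:
  fixes q :: "real \<Rightarrow> complex" and phi dphi :: "real \<Rightarrow> real"
  defines "um \<equiv> (\<lambda>x. dphi x / 2 - cmod (q x))"
      and "up \<equiv> (\<lambda>x. dphi x / 2 + cmod (q x))"
  assumes polar: "\<And>x. q x = complex_of_real (cmod (q x)) * exp (\<i> * complex_of_real (phi x))"
      and nonvan: "\<And>x. q x \<noteq> 0"
      and qbdd: "ess_bounded (\<lambda>x. cmod (q x))"
      and phiAC: "loc_AC_with_deriv phi dphi"
      and dphibdd: "ess_bounded dphi"
      and umbdd: "ess_bounded um"
      and upbdd: "ess_bounded up"
  shows "bij_betw (\<lambda>u x. Mmat phi x *v u x) L2set L2set
       \<and> bij_betw (\<lambda>u x. Mmat phi x *v u x) H1set H1set
       \<and> (\<forall>u u' v'. u \<in> H1set \<longrightarrow> H1_deriv u u' \<longrightarrow>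
             H1_deriv (\<lambda>x. Mmat phi x *v u x) v' \<longrightarrow>
             (AE x in lborel. Lax_op q u u' x
                = adjoint_mat (Mmat phi x) *v calL_op um up (\<lambda>y. Mmat phi y *v u y) v' x))"
proof -
  have M: "W1_inf (Mmat phi) (\<lambda>x. phase_mat (\<i> * of_real (dphi x / 2) * half_phase phi x))"
    using W1_inf_linear[OF W1_inf_half_phase[OF phiAC dphibdd] bounded_linear_phase_mat]
    by (simp add: Mmat_eq_phase_mat[abs_def])
  have unitary: "adjoint_mat (Mmat phi x) *v (Mmat phi x *v y) = y"
    "Mmat phi x *v (adjoint_mat (Mmat phi x) *v y) = y" for x y
    by (simp_all add: Mmat_eq_phase_mat phase_mat_unitary)
  have "AE x in lborel. Lax_op q u u' x
          = adjoint_mat (Mmat phi x) *v calL_op um up (\<lambda>y. Mmat phi y *v u y) v' x"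
    if "u \<in> H1set" "H1_deriv u u'" "H1_deriv (\<lambda>x. Mmat phi x *v u x) v'" for u u' v'
  proof -
    have "H1_deriv (\<lambda>x. Mmat phi x *v u x)
        (\<lambda>x. phase_mat (\<i> * of_real (dphi x / 2) * half_phase phi x) *v u x + Mmat phi x *v u' x)"
      using that by (intro W1_inf_mult_H1_deriv[OF M]) (simp_all add: H1set_def)
    with that(3) have "AE x in lborel.
        v' x = phase_mat (\<i> * of_real (dphi x / 2) * half_phase phi x) *v u x + Mmat phi x *v u' x"
      by (rule H1_deriv_unique_AE)
    then show ?thesis
      unfolding um_def up_def
      by eventually_elim (rule Lax_op_eq_adjoint_calL_op[where q = q and phi = phi, OF polar])
  qed
  then show ?thesis
    using bij_betw_unitary_W1_inf_mult[OF M unitary] by blast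
qed

end
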